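(* If $f:2^\omega\to\mathbb R$ is continuous and $g:2^\omega\to\mathbb R$ is non-constant, then $f\le_{\mathbf m} g$.
   Context: Questions: for $y\in\mathbb R$, $p\in\mathbb Q$, $\varepsilon\in\mathbb Q^+$, a bit $b\in\{0,1\}$ is a correct answer to "$y\lesssim_\varepsilon p$" if either $b=1$ and $y<p+\varepsilon$, or $b=0$ and $y>p-\varepsilon$. $f\le_{\mathbf m} g$ means: for every $p\in\mathbb Q,\varepsilon\in\mathbb Q^+$ there are $q\in\mathbb Q,\delta\in\mathbb Q^+$ and a continuous $k:2^\omega\to2^\omega$ such that for every $A\in2^\omega$, every correct answer to $g(k(A))\lesssim_\delta q$ is a correct answer to $f(A)\lesssim_\varepsilon p$. *)

theory Defs
  imports "HOL-Analysis.Analysis"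
begin

text \<open>Cantor space 2^omega is the type nat \<Rightarrow> bool with the product topology
(library instance for function spaces; bool carries its order topology, which is discrete).\<close>

type_synonym cantor = "nat \<Rightarrow> bool"

definition correct_answer :: "real \<Rightarrow> rat \<Rightarrow> rat \<Rightarrow> bool \<Rightarrow> bool" where
  "correct_answer y p eps b \<longleftrightarrow>
     (b \<and> y < real_of_rat p + real_of_rat eps) \<or> (\<not> b \<and> y > real_of_rat p - real_of_rat eps)"

definition m_reducible :: "(cantor \<Rightarrow> real) \<Rightarrow> (cantor \<Rightarrow> real) \<Rightarrow> bool" where
  "m_reducible f g \<longleftrightarrow>
     (\<forall>p eps. eps > 0 \<longrightarrow>
        (\<exists>q \<delta> (k :: cantor \<Rightarrow> cantor). \<delta> > 0 \<and> continuous_on UNIV k \<and>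
           (\<forall>A b. correct_answer (g (k A)) q \<delta> b \<longrightarrow> correct_answer (f A) p eps b)))"

end

theory Submission imports Defs begin

text \<open>A continuous f on the compact space 2^\<omega> is uniformly within \<open>\<epsilon>\<close> of a function of the first
  N bits. So the question f(A) \<lesssim>_\<epsilon> p is answered correctly by a clopen set C of oracles:
  "yes" on C, "no" off C. Since g is non-constant, pick g(A0) < q < g(B0) with margin \<delta>;
  the map k sending C to A0 and its complement to B0 is continuous, and the only correct
  answer to g(k A) \<lesssim>_\<delta> q is "yes" on C and "no" off C.\<close>

definition cylinder :: "cantor \<Rightarrow> nat \<Rightarrow> cantor set" where
  "cylinder A n = {B. \<forall>i<n. B i = A i}"

definition truncate :: "nat \<Rightarrow> cantor \<Rightarrow> cantor" where
  "truncate n A = (\<lambda>i. i < n \<and> A i)"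

lemma mem_cylinder_self [simp]: "A \<in> cylinder A n"
  by (simp add: cylinder_def)

lemma open_cylinder: "open (cylinder A n)"
proof -
  have "cylinder A n = (\<Inter>i<n. (\<lambda>B. B i) -` {A i})"
    unfolding cylinder_def by auto
  moreover have "open ((\<lambda>B::cantor. B i) -` {A i})" for i
    by (rule open_vimage[OF open_discrete continuous_on_product_coordinates])
  ultimately show ?thesis by auto
qed

lemma open_contains_cylinder:
  assumes "open U" "A \<in> U"
  obtains n where "cylinder A n \<subseteq> U"
proof -
  have "openin (product_topology (\<lambda>i. euclidean) UNIV) U"
    using assms(1) unfolding open_fun_def by simp
  from product_topology_open_contains_basis[OF this assms(2)]
  obtain X where X: "A \<in> (\<Pi>\<^sub>E i\<in>UNIV. X i)" "finite {i. X i \<noteq> UNIV}" "(\<Pi>\<^sub>E i\<in>UNIV. X i) \<subseteq> U"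
    by auto
  obtain n where n: "\<And>i. X i \<noteq> UNIV \<Longrightarrow> i < n"
    using X(2) by (auto simp: finite_nat_set_iff_bounded)
  have "cylinder A n \<subseteq> (\<Pi>\<^sub>E i\<in>UNIV. X i)"
    using n X(1) by (fastforce simp: cylinder_def PiE_iff)
  then show thesis
    using X(3) that by (meson order_trans)
qed

lemma mem_cylinder_iff_truncate_eq: "B \<in> cylinder A n \<longleftrightarrow> truncate n B = truncate n A"
  by (auto simp: truncate_def cylinder_def fun_eq_iff)

lemma truncate_mem_cylinder: "m \<le> n \<Longrightarrow> B \<in> cylinder A m \<Longrightarrow> truncate n B \<in> cylinder A m"
  by (simp add: truncate_def cylinder_def)

lemma compact_UNIV_cantor: "compact (UNIV :: cantor set)"
proof -
  have "compact_space (euclidean :: bool topology)"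
    by (simp add: compact_space_def compactin_euclidean_iff finite_imp_compact)
  then have "compact_space (product_topology (\<lambda>i::nat. (euclidean :: bool topology)) UNIV)"
    by (simp add: compact_space_product_topology)
  then show ?thesis
    by (simp add: compact_space_def euclidean_product_topology compactin_euclidean_iff)
qed

lemma open_if_determined_by_prefix:
  assumes "\<And>A B. B \<in> cylinder A n \<Longrightarrow> A \<in> C \<Longrightarrow> B \<in> C"
  shows "open C"
proof -
  have "C = (\<Union>A\<in>C. cylinder A n)"
    using assms by auto
  then show ?thesis
    by (metis open_UN open_cylinder)
qed

lemma clopen_truncate_preimage: "open {A. truncate n A \<in> S}" "closed {A. truncate n A \<in> S}"
proof -
  have determined: "open {A. P (truncate n A)}" for P
    by (rule open_if_determined_by_prefix[where n = n]) (simp add: mem_cylinder_iff_truncate_eq)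
  show "open {A. truncate n A \<in> S}"
    using determined .
  show "closed {A. truncate n A \<in> S}"
    using determined[of "\<lambda>B. B \<notin> S"] by (simp add: closed_def Collect_neg_eq)
qed

text \<open>Each point gets a cylinder on which f varies by less than \<open>\<epsilon>/2\<close>; a finite subcover
  bounds the needed prefix lengths, and a point and its truncation lie in a common cylinder.\<close>

lemma continuous_on_cantor_truncate_approx:
  fixes f :: "cantor \<Rightarrow> 'a::metric_space"
  assumes f: "continuous_on UNIV f" and "e > 0"
  obtains N where "\<And>B. dist (f B) (f (truncate N B)) < e"
proof -
  have "\<exists>n. cylinder A n \<subseteq> f -` ball (f A) (e/2)" for A
    using open_vimage[OF open_ball f] \<open>e > 0\<close>
    by (metis centre_in_ball half_gt_zero open_contains_cylinder vimageI2)
  then obtain n where n: "\<And>A. cylinder A (n A) \<subseteq> f -` ball (f A) (e/2)"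
    by metis
  obtain T where T: "finite T" "UNIV \<subseteq> (\<Union>A\<in>T. cylinder A (n A))"
    by (rule compactE_image[OF compact_UNIV_cantor, of UNIV "\<lambda>A. cylinder A (n A)"])
       (auto simp: open_cylinder)
  define N where "N = (\<Sum>A\<in>T. n A)"
  have "dist (f B) (f (truncate N B)) < e" for B
  proof -
    obtain A where A: "A \<in> T" "B \<in> cylinder A (n A)"
      using T(2) by blast
    have "n A \<le> N"
      unfolding N_def using A(1) T(1) by (simp add: member_le_sum)
    then have "truncate N B \<in> cylinder A (n A)"
      using A(2) by (rule truncate_mem_cylinder)
    then have "dist (f B) (f A) < e/2" "dist (f (truncate N B)) (f A) < e/2"
      using n[of A] A(2) by (auto simp: dist_commute)
    then show ?thesis
      by (rule dist_triangle_half_l)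
  qed
  then show thesis using that by blast
qed

lemma continuous_on_two_valued:
  assumes "open C" "closed C"
  shows "continuous_on UNIV (\<lambda>x. if x \<in> C then a else b)"
proof -
  have "continuous_on (C \<union> - C) (\<lambda>x. if x \<in> C then a else b)"
    by (rule continuous_on_cases) (use assms in auto)
  then show ?thesis by simp
qed

lemma correct_answer_transfer:
  assumes "\<bar>x - x'\<bar> < real_of_rat e"
    and "x' < real_of_rat p \<Longrightarrow> y < real_of_rat q - real_of_rat d"
    and "\<not> x' < real_of_rat p \<Longrightarrow> real_of_rat q + real_of_rat d < y"
    and "correct_answer y q d b"
  shows "correct_answer x p e b"
  using assms unfolding correct_answer_def by (cases "x' < real_of_rat p") auto

lemma nonconstant_rat_gap:
  fixes g :: "'a \<Rightarrow> real"
  assumes "\<exists>A B. g A \<noteq> g B"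
  obtains A B q d where "d > 0" "g A < real_of_rat q - real_of_rat d" "real_of_rat q + real_of_rat d < g B"
proof -
  obtain A B where AB: "g A < g B"
    using assms by (metis linorder_neqE_linordered_idom)
  obtain q where q: "g A < real_of_rat q" "real_of_rat q < g B"
    using of_rat_dense[OF AB] by blast
  then obtain d where d: "0 < real_of_rat d" "real_of_rat d < min (real_of_rat q - g A) (g B - real_of_rat q)"
    using of_rat_dense[of 0 "min (real_of_rat q - g A) (g B - real_of_rat q)"] by auto
  show thesis
    by (rule that[of d A q B]) (use d in auto)
qed

theorem mainTheorem18:
  fixes f g :: "cantor \<Rightarrow> real"
  assumes "continuous_on UNIV f"
    and "\<exists>A B. g A \<noteq> g B"
  shows "m_reducible f g"
  unfolding m_reducible_def
proof (intro allI impI)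
  fix p e :: rat
  assume "e > 0"
  obtain A0 B0 q d where d: "d > 0"
    and A0: "g A0 < real_of_rat q - real_of_rat d" and B0: "real_of_rat q + real_of_rat d < g B0"
    by (rule nonconstant_rat_gap[OF assms(2)])
  have "real_of_rat e > 0"
    using \<open>e > 0\<close> by simp
  then obtain N where N: "\<And>A. dist (f A) (f (truncate N A)) < real_of_rat e"
    using continuous_on_cantor_truncate_approx[OF assms(1)] by blast
  define C where "C = {A. truncate N A \<in> {B. f B < real_of_rat p}}"
  define k where "k = (\<lambda>A. if A \<in> C then A0 else B0)"
  have "continuous_on UNIV k"
    unfolding k_def C_def by (intro continuous_on_two_valued clopen_truncate_preimage)
  moreover have "correct_answer (f A) p e b" if answer: "correct_answer (g (k A)) q d b" for A b
  proof (rule correct_answer_transfer)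
    show "\<bar>f A - f (truncate N A)\<bar> < real_of_rat e"
      using N[of A] by (simp add: dist_real_def)
    show "g (k A) < real_of_rat q - real_of_rat d" if "f (truncate N A) < real_of_rat p"
      using A0 that by (simp add: k_def C_def)
    show "real_of_rat q + real_of_rat d < g (k A)" if "\<not> f (truncate N A) < real_of_rat p"
      using B0 that by (simp add: k_def C_def)
  qed (fact answer)
  ultimately show "\<exists>q \<delta> k. \<delta> > 0 \<and> continuous_on UNIV k \<and>
      (\<forall>A b. correct_answer (g (k A)) q \<delta> b \<longrightarrow> correct_answer (f A) p e b)"
    using d by (intro exI[of _ q] exI[of _ d] exI[of _ k]) simp
qed

end
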